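(* Let $L$ be a (right) Leibniz algebra and $B\neq\{0\}$ an ideal of $L$. Let $P_0=a_ma_{m-1}\cdots a_2a_1$ be a right product of elements $a_1,\dots,a_m\in L$ such that at least $n\geq 1$ of the factors $a_i$ belong to $B$. Then $P_0\in B_n$, where $B_1=B$ and $B_k=B^k+\mathrm{Es}(B)$ for $k\geq 2$.
   Context: A (right) Leibniz algebra is a vector space $L$ over a field $F$ (characteristic $\neq 2$, finite-dimensional) with a bilinear product $(x,y)\mapsto xy$ satisfying $x(yz)=(xy)z-(xz)y$ for all $x,y,z\in L$. For subspaces $U,V$, $UV$ is the span of all $uv$. An ideal is a subspace $B$ with $LB\subseteq B$, $BL\subseteq B$. Right powers: $B^1=B$, $B^{k+1}=B^kB$. $\mathrm{Ess}(L)$ is the ideal generated by all squares $xx$, and $\mathrm{Es}(B)=B\cap\mathrm{Ess}(L)$. Right product: $a_ma_{m-1}\cdots a_1:=((\cdots((a_ma_{m-1})a_{m-2})\cdots)a_2)a_1$. *)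

theory Defs
  imports Complex_Main
begin

definition leibniz_algebra ::
  "('f::field \<Rightarrow> 'v::ab_group_add \<Rightarrow> 'v) \<Rightarrow> ('v \<Rightarrow> 'v \<Rightarrow> 'v) \<Rightarrow> bool" where
  "leibniz_algebra scale mult \<longleftrightarrow>
     vector_space scale \<and>
     (2::'f) \<noteq> 0 \<and>
     (\<exists>S. finite S \<and> module.span scale S = UNIV) \<and>
     (\<forall>x y z. mult (x + y) z = mult x z + mult y z) \<and>
     (\<forall>x y z. mult x (y + z) = mult x y + mult x z) \<and>
     (\<forall>c x y. mult (scale c x) y = scale c (mult x y)) \<and>
     (\<forall>c x y. mult x (scale c y) = scale c (mult x y)) \<and>
     (\<forall>x y z. mult x (mult y z) = mult (mult x y) z - mult (mult x z) y)"

definition setprod ::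
  "('f::field \<Rightarrow> 'v::ab_group_add \<Rightarrow> 'v) \<Rightarrow> ('v \<Rightarrow> 'v \<Rightarrow> 'v) \<Rightarrow> 'v set \<Rightarrow> 'v set \<Rightarrow> 'v set" where
  "setprod scale mult U V = module.span scale {mult u v | u v. u \<in> U \<and> v \<in> V}"

definition lideal ::
  "('f::field \<Rightarrow> 'v::ab_group_add \<Rightarrow> 'v) \<Rightarrow> ('v \<Rightarrow> 'v \<Rightarrow> 'v) \<Rightarrow> 'v set \<Rightarrow> bool" where
  "lideal scale mult B \<longleftrightarrow> module.subspace scale B \<and>
     (\<forall>x b. b \<in> B \<longrightarrow> mult x b \<in> B \<and> mult b x \<in> B)"

fun rpow ::
  "('f::field \<Rightarrow> 'v::ab_group_add \<Rightarrow> 'v) \<Rightarrow> ('v \<Rightarrow> 'v \<Rightarrow> 'v) \<Rightarrow> 'v set \<Rightarrow> nat \<Rightarrow> 'v set" where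
  "rpow scale mult B 0 = B"
| "rpow scale mult B (Suc 0) = B"
| "rpow scale mult B (Suc (Suc k)) = setprod scale mult (rpow scale mult B (Suc k)) B"

definition Ess ::
  "('f::field \<Rightarrow> 'v::ab_group_add \<Rightarrow> 'v) \<Rightarrow> ('v \<Rightarrow> 'v \<Rightarrow> 'v) \<Rightarrow> 'v set" where
  "Ess scale mult = \<Inter>{I. lideal scale mult I \<and> {mult x x | x. True} \<subseteq> I}"

definition Es ::
  "('f::field \<Rightarrow> 'v::ab_group_add \<Rightarrow> 'v) \<Rightarrow> ('v \<Rightarrow> 'v \<Rightarrow> 'v) \<Rightarrow> 'v set \<Rightarrow> 'v set" where
  "Es scale mult B = B \<inter> Ess scale mult"

definition Bsub ::
  "('f::field \<Rightarrow> 'v::ab_group_add \<Rightarrow> 'v) \<Rightarrow> ('v \<Rightarrow> 'v \<Rightarrow> 'v) \<Rightarrow> 'v set \<Rightarrow> nat \<Rightarrow> 'v set" where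
  "Bsub scale mult B k = (if k \<le> 1 then B else
     {x + y | x y. x \<in> rpow scale mult B k \<and> y \<in> Es scale mult B})"

text \<open>Right product a_m a_(m-1) ... a_1 = ((...(a_m a_(m-1))...)a_2)a_1 of the
  nonempty list [a_m, a_(m-1), ..., a_1].\<close>
definition rprod :: "('v \<Rightarrow> 'v \<Rightarrow> 'v) \<Rightarrow> 'v list \<Rightarrow> 'v" where
  "rprod mult xs = foldl mult (hd xs) (tl xs)"

end

theory Submission
  imports Defs
begin

text \<open>In a right Leibniz algebra the identity \<open>(vb)x = v(bx) + (vx)b\<close> shows, by induction on
  \<open>k\<close>, that every right power \<open>B\<^sup>k\<close> of an ideal is closed under right multiplication by
  arbitrary elements. Peeling off the last factor of a right product then gives
  \<open>a\<^sub>m \<cdots> a\<^sub>1 \<in> B\<^sup>n\<close> whenever at least \<open>n\<close> of the factors lie in \<open>B\<close>: a factor in \<open>B\<close>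
  raises the power by one, any other factor keeps it. Since \<open>0 \<in> Es(B)\<close>, the power
  \<open>B\<^sup>n\<close> is contained in \<open>B\<^sub>n\<close>.\<close>

lemma leibniz_algebra_vector_space:
  "leibniz_algebra scale mult \<Longrightarrow> vector_space scale"
  by (simp add: leibniz_algebra_def)

lemma leibniz_mult_mult_right:
  assumes "leibniz_algebra scale mult"
  shows "mult (mult x y) z = mult x (mult y z) + mult (mult x z) y"
  using assms unfolding leibniz_algebra_def by (metis diff_add_cancel)

lemma leibniz_mult_zero_left:
  assumes "leibniz_algebra scale mult"
  shows "mult 0 x = 0"
proof -
  have "mult (0 + 0) x = mult 0 x + mult 0 x"
    using assms unfolding leibniz_algebra_def by blast
  then show ?thesis by simp
qed

lemma leibniz_mult_span_left:
  assumes L: "leibniz_algebra scale mult"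
    and T: "module.subspace scale T"
    and u: "u \<in> module.span scale S"
    and ST: "\<And>s. s \<in> S \<Longrightarrow> mult s x \<in> T"
  shows "mult u x \<in> T"
proof -
  interpret vector_space scale using L by (rule leibniz_algebra_vector_space)
  have add: "mult (u + v) x = mult u x + mult v x"
    and scale: "mult (scale c u) x = scale c (mult u x)" for u v c
    using L unfolding leibniz_algebra_def by blast+
  have "subspace {u. mult u x \<in> T}"
    using T leibniz_mult_zero_left[OF L]
    unfolding subspace_def by (simp add: add scale)
  from span_subspace_induct[OF u this] show ?thesis
    using ST by blast
qed

lemma mult_in_setprod:
  assumes "leibniz_algebra scale mult" and "u \<in> U" and "v \<in> V"
  shows "mult u v \<in> setprod scale mult U V"
proof -
  interpret vector_space scale using assms(1) by (rule leibniz_algebra_vector_space)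
  show ?thesis unfolding setprod_def by (rule span_base) (use assms in blast)
qed

lemma rpow_Suc_mult_right_closed:
  assumes L: "leibniz_algebra scale mult"
    and B: "\<And>b x. b \<in> B \<Longrightarrow> mult b x \<in> B"
  shows "u \<in> rpow scale mult B (Suc k) \<Longrightarrow> mult u x \<in> rpow scale mult B (Suc k)"
proof (induction k arbitrary: u x)
  case 0
  then show ?case using B by simp
next
  case (Suc k)
  interpret vector_space scale using L by (rule leibniz_algebra_vector_space)
  let ?P = "rpow scale mult B (Suc k)"
  show ?case
    unfolding rpow.simps setprod_def
  proof (rule leibniz_mult_span_left[OF L subspace_span])
    show "u \<in> span {mult v b |v b. v \<in> ?P \<and> b \<in> B}"
      using Suc.prems by (simp add: setprod_def)
  next
    fix s assume "s \<in> {mult v b |v b. v \<in> ?P \<and> b \<in> B}"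
    then obtain v b where s: "s = mult v b" and v: "v \<in> ?P" and b: "b \<in> B" by blast
    have "mult v (mult b x) \<in> setprod scale mult ?P B"
      using v B[OF b] by (rule mult_in_setprod[OF L])
    moreover have "mult (mult v x) b \<in> setprod scale mult ?P B"
      using Suc.IH[OF v] b by (rule mult_in_setprod[OF L])
    ultimately show "mult s x \<in> span {mult v b |v b. v \<in> ?P \<and> b \<in> B}"
      unfolding s setprod_def by (subst leibniz_mult_mult_right[OF L]) (rule span_add)
  qed
qed

lemma rpow_mult_right_closed:
  assumes "leibniz_algebra scale mult"
    and "\<And>b x. b \<in> B \<Longrightarrow> mult b x \<in> B"
    and "u \<in> rpow scale mult B k"
  shows "mult u x \<in> rpow scale mult B k"
  using assms(2,3) rpow_Suc_mult_right_closed[OF assms(1,2)] by (cases k) simp_all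

lemma rprod_snoc:
  "xs \<noteq> [] \<Longrightarrow> rprod mult (xs @ [a]) = mult (rprod mult xs) a"
  by (cases xs) (auto simp: rprod_def)

lemma rprod_in_rpow:
  assumes L: "leibniz_algebra scale mult" and I: "lideal scale mult B"
    and "as \<noteq> []" and "n \<ge> 1" and "length (filter (\<lambda>a. a \<in> B) as) \<ge> n"
  shows "rprod mult as \<in> rpow scale mult B n"
  using assms(3-5)
proof (induction as arbitrary: n rule: rev_induct)
  case (snoc a xs n)
  have right_closed: "\<And>b x. b \<in> B \<Longrightarrow> mult b x \<in> B"
    using I by (simp add: lideal_def)
  show ?case
  proof (cases "xs = []")
    case True
    then show ?thesis using snoc.prems by (auto simp: rprod_def split: if_splits)
  next
    case xs: False
    show ?thesis
    proof (cases "a \<in> B")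
      case a: True
      show ?thesis
      proof (cases "n = 1")
        case True
        then show ?thesis using a I xs by (simp add: rprod_snoc lideal_def)
      next
        case False
        then obtain m where m: "n = Suc (Suc m)"
          using snoc.prems(2) by (metis One_nat_def Suc_le_D not_less_eq_eq le_antisym)
        have "rprod mult xs \<in> rpow scale mult B (Suc m)"
          using snoc.IH[OF xs, of "Suc m"] snoc.prems(3) a m by simp
        then show ?thesis
          using xs a m by (simp add: rprod_snoc mult_in_setprod[OF L])
      qed
    next
      case False
      then have "rprod mult xs \<in> rpow scale mult B n"
        using snoc.IH[OF xs snoc.prems(2)] snoc.prems(3) by simp
      then show ?thesis
        using xs by (simp add: rprod_snoc rpow_mult_right_closed[OF L right_closed])
    qed
  qed
qed simp

lemma zero_in_Es:
  assumes "leibniz_algebra scale mult" and "lideal scale mult B"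
  shows "0 \<in> Es scale mult B"
proof -
  interpret vector_space scale using assms(1) by (rule leibniz_algebra_vector_space)
  show ?thesis
    using assms(2) by (auto simp: Es_def Ess_def lideal_def subspace_0)
qed

lemma rpow_subset_Bsub:
  assumes "leibniz_algebra scale mult" and "lideal scale mult B"
  shows "rpow scale mult B n \<subseteq> Bsub scale mult B n"
proof
  fix x assume x: "x \<in> rpow scale mult B n"
  show "x \<in> Bsub scale mult B n"
  proof (cases "n \<le> 1")
    case True
    then have "rpow scale mult B n = B" by (cases n) auto
    then show ?thesis using True x by (simp add: Bsub_def)
  next
    case False
    have "x + 0 \<in> {x + y |x y. x \<in> rpow scale mult B n \<and> y \<in> Es scale mult B}"
      using x zero_in_Es[OF assms] by blast
    then show ?thesis using False by (simp add: Bsub_def)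
  qed
qed

theorem lemma4p2:
  fixes scale :: "'f::field \<Rightarrow> 'v::ab_group_add \<Rightarrow> 'v"
    and mult :: "'v \<Rightarrow> 'v \<Rightarrow> 'v"
    and B :: "'v set" and as :: "'v list" and n :: nat
  assumes "leibniz_algebra scale mult"
    and "lideal scale mult B"
    and "B \<noteq> {0}"
    and "as \<noteq> []"
    and "n \<ge> 1"
    and "length (filter (\<lambda>a. a \<in> B) as) \<ge> n"
  shows "rprod mult as \<in> Bsub scale mult B n"
  using rprod_in_rpow[OF assms(1,2,4-6)] rpow_subset_Bsub[OF assms(1,2)] by blast

end
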